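(* Let $1<n\le d$. Let $\mathrm{Stationary}:(\mathbb{R}^d)^{n+1}\to\{\mathsf{true},\mathsf{false}\}$ be a first-order stationarity condition that is necessary, i.e. for every smooth preference function $f_0:\mathbb{R}^d\to\mathbb{R}$, every collection of smooth strongly convex objectives $f_1,\dots,f_n:\mathbb{R}^d\to\mathbb{R}$, and every $x$ that is preference optimal for $(f_0,f_1,\dots,f_n)$, one has $\mathrm{Stationary}(\nabla f_0(x),\nabla f_1(x),\dots,\nabla f_n(x))=\mathsf{true}$. Then $\mathrm{Stationary}$ is trivial in the following sense: for any preference generic set of vectors $v_0,\dots,v_n\in\mathbb{R}^d$, $\mathrm{Stationary}(v_0,\dots,v_n)=\mathsf{true}$.
   Context: $\Delta^{n-1}$ is the simplex of convex weights in $\mathbb{R}^n$. For objectives $F=(f_1,\dots,f_n)$, a point $x$ is Pareto optimal if for all $x'$, $f_i(x')<f_i(x)$ for some $i$ implies $f_j(x')>f_j(x)$ for some $j$; $\mathrm{Pareto}(F)$ denotes the set of Pareto optimal points. A point $x\in\mathrm{Pareto}(F)$ is preference optimal (for preference $f_0$) if $f_0(x)\le f_0(x')$ for all $x'\in\mathrm{Pareto}(F)$. A set $\{v_0,v_1,\dots,v_n\}\subset\mathbb{R}^d$ with $1<n\le d$ is preference generic if there is a unique $\beta\in\Delta^{n-1}$ with $\beta_1v_1+\dots+\beta_nv_n=0$, and $v_0\notin\mathrm{span}(v_1,\dots,v_n)$. *)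

theory Defs
  imports "HOL-Analysis.Analysis"
begin

coinductive smooth_fun :: "(real^'d \<Rightarrow> real) \<Rightarrow> bool" where
  "(\<forall>x. (f has_derivative (\<lambda>h. G x \<bullet> h)) (at x)) \<Longrightarrow> (\<forall>i. smooth_fun (\<lambda>x. G x $ i))
   \<Longrightarrow> smooth_fun f"

definition strongly_convex :: "(real^'d \<Rightarrow> real) \<Rightarrow> bool" where
  "strongly_convex f \<longleftrightarrow> (\<exists>m>0. convex_on UNIV (\<lambda>x. f x - m / 2 * (norm x)\<^sup>2))"

definition Pareto :: "('n \<Rightarrow> 'a \<Rightarrow> real) \<Rightarrow> 'a set" where
  "Pareto F = {x. \<forall>x'. (\<exists>i. F i x' < F i x) \<longrightarrow> (\<exists>j. F j x' > F j x)}"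

definition preference_optimal :: "('a \<Rightarrow> real) \<Rightarrow> ('n \<Rightarrow> 'a \<Rightarrow> real) \<Rightarrow> 'a \<Rightarrow> bool" where
  "preference_optimal f0 F x \<longleftrightarrow> x \<in> Pareto F \<and> (\<forall>x'\<in>Pareto F. f0 x \<le> f0 x')"

definition weight_simplex :: "('n::finite \<Rightarrow> real) set" where
  "weight_simplex = {\<beta>. (\<forall>i. 0 \<le> \<beta> i) \<and> (\<Sum>i\<in>UNIV. \<beta> i) = 1}"

definition preference_generic :: "real^'d \<Rightarrow> ('n::finite \<Rightarrow> real^'d) \<Rightarrow> bool" where
  "preference_generic v0 v \<longleftrightarrow>
     (\<exists>!\<beta>. \<beta> \<in> weight_simplex \<and> (\<Sum>i\<in>UNIV. \<beta> i *\<^sub>R v i) = 0) \<and> v0 \<notin> span (range v)"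

end

theory Submission
  imports Defs
begin

text \<open>Realise the generic vectors as gradients at the origin of a problem in which the origin
is preference optimal. Let \<open>u \<noteq> 0\<close> be the component of \<open>v\<^sub>0\<close> orthogonal to
\<open>span {v\<^sub>1, \<dots>, v\<^sub>n}\<close>, let \<open>f\<^sub>0 x = v\<^sub>0 \<bullet> x\<close> and \<open>f\<^sub>i x = v\<^sub>i \<bullet> x + Q x\<close> with the positive
definite quadratic form \<open>Q x = \<bar>u\<bar>\<^sup>2/4 \<bar>x\<bar>\<^sup>2 + ((v\<^sub>0 - u/2) \<bullet> x)\<^sup>2\<close>. The weights \<open>\<beta>\<close> with
\<open>\<Sum>\<beta>\<^sub>i v\<^sub>i = 0\<close> give \<open>\<Sum>\<beta>\<^sub>i f\<^sub>i = Q\<close>, whose unique minimizer \<open>0\<close> is therefore Pareto optimal.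
Moving along \<open>u\<close> changes every \<open>f\<^sub>i\<close> by the same amount, so at a Pareto point \<open>x\<close> the
derivative of \<open>Q\<close> in direction \<open>u\<close> vanishes; by the choice of \<open>Q\<close> this derivative is
\<open>\<bar>u\<bar>\<^sup>2/2 (v\<^sub>0 \<bullet> x)\<close>. Hence \<open>f\<^sub>0\<close> vanishes on the whole Pareto set and \<open>0\<close> is preference
optimal.\<close>

definition quadratic_fun :: "real \<Rightarrow> real^'d \<Rightarrow> real \<Rightarrow> real^'d \<Rightarrow> real^'d \<Rightarrow> real" where
  "quadratic_fun a b c k = (\<lambda>x. a + b \<bullet> x + c * (x \<bullet> x) + (k \<bullet> x)\<^sup>2)"

lemma has_derivative_quadratic_fun:
  "(quadratic_fun a b c k has_derivative
     (\<lambda>h. (b + (2 * c) *\<^sub>R x + (2 * (k \<bullet> x)) *\<^sub>R k) \<bullet> h)) (at x)"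
  unfolding quadratic_fun_def
  by (auto intro!: derivative_eq_intros ext simp: inner_add_left inner_commute algebra_simps)

lemma quadratic_fun_gradient_component:
  "(\<lambda>x. (b + (2 * c) *\<^sub>R x + (2 * (k \<bullet> x)) *\<^sub>R k) $ i)
    = quadratic_fun (b $ i) ((2 * c) *\<^sub>R axis i 1 + (2 * k $ i) *\<^sub>R k) 0 0"
  by (auto simp: quadratic_fun_def cart_eq_inner_axis[of x i for x] inner_add_left
      inner_commute algebra_simps)

lemma smooth_fun_quadratic_fun: "smooth_fun (quadratic_fun a b c k)"
proof -
  have gradient: "\<exists>G. (\<forall>x. (quadratic_fun a b c k has_derivative (\<lambda>h. G x \<bullet> h)) (at x)) \<and>
      (\<forall>i. \<exists>a b c k. (\<lambda>x. G x $ i) = quadratic_fun a b c k)" for a b c k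
  proof (rule exI[of _ "\<lambda>x. b + (2 * c) *\<^sub>R x + (2 * (k \<bullet> x)) *\<^sub>R k"], intro conjI allI)
    show "(quadratic_fun a b c k has_derivative
        (\<lambda>h. (b + (2 * c) *\<^sub>R x + (2 * (k \<bullet> x)) *\<^sub>R k) \<bullet> h)) (at x)" for x
      by (rule has_derivative_quadratic_fun)
    show "\<exists>a' b' c' k'. (\<lambda>x. (b + (2 * c) *\<^sub>R x + (2 * (k \<bullet> x)) *\<^sub>R k) $ i)
        = quadratic_fun a' b' c' k'" for i
      using quadratic_fun_gradient_component by blast
  qed
  show ?thesis
  proof (rule smooth_fun.coinduct[where X = "\<lambda>f. \<exists>a b c k. f = quadratic_fun a b c k"])
    fix f :: "real^'d \<Rightarrow> real"
    assume "\<exists>a b c k. f = quadratic_fun a b c k"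
    then obtain G where "\<forall>x. (f has_derivative (\<lambda>h. G x \<bullet> h)) (at x)"
      and "\<forall>i. \<exists>a b c k. (\<lambda>x. G x $ i) = quadratic_fun a b c k"
      using gradient by blast
    then show "\<exists>f' G. f = f' \<and> (\<forall>x. (f' has_derivative (\<bullet>) (G x)) (at x)) \<and>
        (\<forall>i. (\<exists>a b c k. (\<lambda>x. G x $ i) = quadratic_fun a b c k) \<or> smooth_fun (\<lambda>x. G x $ i))"
      by blast
  qed blast
qed

lemma convex_on_inner: "convex_on UNIV (\<lambda>x. b \<bullet> x)"
  by (simp add: convex_on_def inner_add_right)

lemma convex_on_inner_power2: "convex_on UNIV (\<lambda>x. (k \<bullet> x)\<^sup>2)"
  using convex_power2 by (auto simp: convex_on_def inner_add_right)

lemma strongly_convex_quadratic_fun: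
  assumes "c > 0"
  shows "strongly_convex (quadratic_fun a b c k)"
  unfolding strongly_convex_def
proof (intro exI conjI)
  show "2 * c > 0" using assms by simp
  have "convex_on UNIV (\<lambda>x. a + b \<bullet> x + (k \<bullet> x)\<^sup>2)"
    using convex_on_add[OF convex_on_add[OF convex_on_const[THEN iffD2] convex_on_inner]
        convex_on_inner_power2]
    by simp
  then show "convex_on UNIV (\<lambda>x. quadratic_fun a b c k x - 2 * c / 2 * (norm x)\<^sup>2)"
    by (simp add: quadratic_fun_def power2_norm_eq_inner add.assoc)
qed

lemma Pareto_not_strictly_dominated:
  assumes "x \<in> Pareto F"
  shows "\<not> (\<forall>i. F i y < F i x)"
proof
  assume "\<forall>i. F i y < F i x"
  moreover from this have "\<exists>j. F j x < F j y"
    using assms by (auto simp: Pareto_def)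
  ultimately show False
    using less_asym by blast
qed

lemma Pareto_if_unique_weighted_minimizer:
  fixes F :: "'n::finite \<Rightarrow> 'a \<Rightarrow> real"
  assumes nonneg: "\<And>i. 0 \<le> \<beta> i"
    and minimizer: "\<And>y. y \<noteq> x \<Longrightarrow> (\<Sum>i\<in>UNIV. \<beta> i * F i x) < (\<Sum>i\<in>UNIV. \<beta> i * F i y)"
  shows "x \<in> Pareto F"
  unfolding Pareto_def
proof (intro CollectI allI impI)
  fix y assume "\<exists>i. F i y < F i x"
  then have "(\<Sum>i\<in>UNIV. \<beta> i * F i x) < (\<Sum>i\<in>UNIV. \<beta> i * F i y)"
    by (intro minimizer) auto
  then obtain j where "\<beta> j * F j x < \<beta> j * F j y"
    by (meson not_le sum_mono)
  then show "\<exists>j. F j x < F j y"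
    using nonneg by (meson mult_left_mono not_le)
qed

lemma weighted_sum_quadratic_fun:
  assumes "\<beta> \<in> weight_simplex" and "(\<Sum>i\<in>UNIV. \<beta> i *\<^sub>R v i) = 0"
  shows "(\<Sum>i\<in>UNIV. \<beta> i * quadratic_fun 0 (v i) c k x) = c * (x \<bullet> x) + (k \<bullet> x)\<^sup>2"
proof -
  have "(\<Sum>i\<in>UNIV. \<beta> i * quadratic_fun 0 (v i) c k x)
      = (\<Sum>i\<in>UNIV. \<beta> i *\<^sub>R v i) \<bullet> x + (\<Sum>i\<in>UNIV. \<beta> i) * (c * (x \<bullet> x) + (k \<bullet> x)\<^sup>2)"
    by (simp add: quadratic_fun_def algebra_simps sum.distrib inner_sum_left
        sum_distrib_left sum_distrib_right)
  then show ?thesis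
    using assms by (simp add: weight_simplex_def)
qed

lemma zero_in_Pareto_quadratic_fun:
  assumes "\<beta> \<in> weight_simplex" and "(\<Sum>i\<in>UNIV. \<beta> i *\<^sub>R v i) = 0" and "c > 0"
  shows "0 \<in> Pareto (\<lambda>i. quadratic_fun 0 (v i) c k)"
proof (rule Pareto_if_unique_weighted_minimizer)
  show "0 \<le> \<beta> i" for i
    using assms(1) by (simp add: weight_simplex_def)
  show "(\<Sum>i\<in>UNIV. \<beta> i * quadratic_fun 0 (v i) c k 0) < (\<Sum>i\<in>UNIV. \<beta> i * quadratic_fun 0 (v i) c k y)"
    if "y \<noteq> 0" for y
    using that assms by (simp add: weighted_sum_quadratic_fun add_pos_nonneg)
qed

lemma quadratic_fun_shift:
  "quadratic_fun a b c k (x + t *\<^sub>R u) = quadratic_fun a b c k x + t * (b \<bullet> u)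
     + 2 * t * (c * (u \<bullet> x) + (k \<bullet> u) * (k \<bullet> x)) + t\<^sup>2 * (c * (u \<bullet> u) + (k \<bullet> u)\<^sup>2)"
  by (simp add: quadratic_fun_def inner_add_right inner_add_left inner_commute
      power2_eq_square algebra_simps)

lemma Pareto_quadratic_fun_directional_derivative:
  assumes "c > 0" and orthogonal: "\<And>i. v i \<bullet> u = 0"
    and "x \<in> Pareto (\<lambda>i. quadratic_fun (a i) (v i) c k)"
  shows "c * (u \<bullet> x) + (k \<bullet> u) * (k \<bullet> x) = 0"
proof (rule ccontr)
  define A where "A = c * (u \<bullet> x) + (k \<bullet> u) * (k \<bullet> x)"
  define B where "B = c * (u \<bullet> u) + (k \<bullet> u)\<^sup>2"
  assume "c * (u \<bullet> x) + (k \<bullet> u) * (k \<bullet> x) \<noteq> 0"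
  then have "A \<noteq> 0" and "u \<noteq> 0"
    by (auto simp: A_def)
  then have "B > 0"
    using \<open>c > 0\<close> by (simp add: B_def add_pos_nonneg)
  have "quadratic_fun (a i) (v i) c k (x + (- A / B) *\<^sub>R u)
      = quadratic_fun (a i) (v i) c k x - A\<^sup>2 / B" for i
  proof -
    have "quadratic_fun (a i) (v i) c k (x + (- A / B) *\<^sub>R u)
        = quadratic_fun (a i) (v i) c k x + 2 * (- A / B) * A + (- A / B)\<^sup>2 * B"
      unfolding quadratic_fun_shift orthogonal A_def B_def by simp
    also have "\<dots> = quadratic_fun (a i) (v i) c k x - A\<^sup>2 / B"
      using \<open>B > 0\<close> by (simp add: field_simps power2_eq_square)
    finally show ?thesis .
  qed
  moreover have "A\<^sup>2 / B > 0"
    using \<open>A \<noteq> 0\<close> \<open>B > 0\<close> by simp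
  ultimately have "\<forall>i. quadratic_fun (a i) (v i) c k (x + (- A / B) *\<^sub>R u) < quadratic_fun (a i) (v i) c k x"
    by simp
  then show False
    using Pareto_not_strictly_dominated[OF assms(3)] by blast
qed

lemma orthogonal_component_outside_span:
  fixes v0 :: "'a::euclidean_space"
  assumes "v0 \<notin> span S"
  obtains u where "u \<noteq> 0" and "\<And>w. w \<in> S \<Longrightarrow> w \<bullet> u = 0" and "v0 \<bullet> u = u \<bullet> u"
proof -
  obtain y u where "y \<in> span S" and u: "\<And>w. w \<in> span S \<Longrightarrow> orthogonal u w" and "v0 = y + u"
    using orthogonal_subspace_decomp_exists by blast
  show ?thesis
  proof
    show "u \<noteq> 0"
      using assms \<open>y \<in> span S\<close> \<open>v0 = y + u\<close> by auto
    show "w \<bullet> u = 0" if "w \<in> S" for w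
      using u[of w] that by (simp add: span_base orthogonal_def inner_commute)
    show "v0 \<bullet> u = u \<bullet> u"
      using u[OF \<open>y \<in> span S\<close>] \<open>v0 = y + u\<close>
      by (simp add: orthogonal_def inner_add_left inner_commute[of y u])
  qed
qed

lemma preference_optimal_zero_quadratic_fun:
  assumes "\<beta> \<in> weight_simplex" and "(\<Sum>i\<in>UNIV. \<beta> i *\<^sub>R v i) = 0"
    and "\<And>i. v i \<bullet> u = 0" and "v0 \<bullet> u = u \<bullet> u" and "u \<noteq> 0"
  shows "preference_optimal (quadratic_fun 0 v0 0 0)
      (\<lambda>i. quadratic_fun 0 (v i) (u \<bullet> u / 4) (v0 - (1 / 2) *\<^sub>R u)) 0"
proof -
  let ?k = "v0 - (1 / 2) *\<^sub>R u"
  have "u \<bullet> u > 0"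
    using \<open>u \<noteq> 0\<close> by simp
  have "v0 \<bullet> x = 0" if "x \<in> Pareto (\<lambda>i. quadratic_fun 0 (v i) (u \<bullet> u / 4) ?k)" for x
  proof -
    have "u \<bullet> u / 4 * (u \<bullet> x) + (?k \<bullet> u) * (?k \<bullet> x) = 0"
      by (rule Pareto_quadratic_fun_directional_derivative[where a = "\<lambda>_. 0", OF _ assms(3) that])
         (use \<open>u \<bullet> u > 0\<close> in simp)
    moreover have "u \<bullet> u / 4 * (u \<bullet> x) + (?k \<bullet> u) * (?k \<bullet> x) = u \<bullet> u / 2 * (v0 \<bullet> x)"
      using assms(4) by (simp add: inner_diff_left inner_diff_right inner_commute algebra_simps)
    ultimately show ?thesis
      using \<open>u \<bullet> u > 0\<close> by simp
  qed
  moreover have "0 \<in> Pareto (\<lambda>i. quadratic_fun 0 (v i) (u \<bullet> u / 4) ?k)"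
    by (rule zero_in_Pareto_quadratic_fun[OF assms(1,2)]) (use \<open>u \<bullet> u > 0\<close> in simp)
  ultimately show ?thesis
    by (simp add: preference_optimal_def quadratic_fun_def)
qed

theorem proposition3:
  fixes Stationary :: "real^'d \<Rightarrow> ('n::finite \<Rightarrow> real^'d) \<Rightarrow> bool"
  assumes "1 < CARD('n)" and "CARD('n) \<le> CARD('d)"
    and necessary: "\<And>f0 F x g0 G.
        smooth_fun f0 \<Longrightarrow> (\<forall>i. smooth_fun (F i) \<and> strongly_convex (F i)) \<Longrightarrow>
        preference_optimal f0 F x \<Longrightarrow>
        (f0 has_derivative (\<lambda>h. g0 \<bullet> h)) (at x) \<Longrightarrow>
        (\<forall>i. (F i has_derivative (\<lambda>h. G i \<bullet> h)) (at x)) \<Longrightarrow>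
        Stationary g0 G"
    and "preference_generic v0 v"
  shows "Stationary v0 v"
proof -
  from \<open>preference_generic v0 v\<close> obtain \<beta> where \<beta>: "\<beta> \<in> weight_simplex" "(\<Sum>i\<in>UNIV. \<beta> i *\<^sub>R v i) = 0"
    and "v0 \<notin> span (range v)"
    unfolding preference_generic_def by blast
  obtain u where "u \<noteq> 0" and "\<And>i. v i \<bullet> u = 0" and "v0 \<bullet> u = u \<bullet> u"
    using orthogonal_component_outside_span[OF \<open>v0 \<notin> span (range v)\<close>] by (metis rangeI)
  define F where "F i = quadratic_fun 0 (v i) (u \<bullet> u / 4) (v0 - (1 / 2) *\<^sub>R u)" for i
  have optimal: "preference_optimal (quadratic_fun 0 v0 0 0) F 0"
    unfolding F_def by (rule preference_optimal_zero_quadratic_fun) fact+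
  show ?thesis
  proof (rule necessary[OF _ _ optimal])
    show "smooth_fun (quadratic_fun 0 v0 0 0)"
      by (rule smooth_fun_quadratic_fun)
    show "\<forall>i. smooth_fun (F i) \<and> strongly_convex (F i)"
      using \<open>u \<noteq> 0\<close> by (simp add: F_def smooth_fun_quadratic_fun strongly_convex_quadratic_fun)
    show "(quadratic_fun 0 v0 0 0 has_derivative (\<lambda>h. v0 \<bullet> h)) (at 0)"
      using has_derivative_quadratic_fun[of 0 v0 0 0 0] by simp
    show "\<forall>i. (F i has_derivative (\<lambda>h. v i \<bullet> h)) (at 0)"
      using has_derivative_quadratic_fun[of 0 "v _" _ _ 0] by (simp add: F_def)
  qed
qed

end
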